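(* Consider the two-dimensional hierarchical heavy hitter algorithm described in the context, over trees of depths $h_1,h_2$, with threshold $\phi\in(0,1]$, and let $A=1+\min(h_1,h_2)$. There exists $\epsilon_0>0$ (depending only on $\phi,h_1,h_2$) such that for every $\epsilon\in(0,\epsilon_0)$ with $1/\epsilon$ a positive integer and every nonempty stream, the set $P$ of prefixes output by the algorithm satisfies $$|P|\le\frac{2}{A\epsilon}\left(\phi-(1+A)\epsilon-\sqrt{(\phi-(1+A)\epsilon)^2-A^2\epsilon}\right).$$
   Context: Hierarchy: rooted trees $T_1,T_2$, all leaves of $T_i$ at depth $h_i$. A prefix is a pair $p=(p_1,p_2)$ of nodes $p_i\in T_i$; fully specified if both are leaves. $e\preceq p$ means $p_i$ is an ancestor of or equal to $e_i$ for $i=1,2$; $e\prec p$ means $e\preceq p$, $e\ne p$. The label of $p$ is $(\mathrm{depth}(p_1),\mathrm{depth}(p_2))$; there are $H=(h_1+1)(h_2+1)$ labels (lattice nodes); $p$ is at level $\mathrm{depth}(p_1)+\mathrm{depth}(p_2)$, and $L=h_1+h_2$. For prefixes $h,h'$: if $h_i,h'_i$ are comparable in $T_i$ for both $i$, $\mathrm{glb}(h,h')$ is the prefix whose $i$-th coordinate is the deeper of $h_i,h'_i$; otherwise $\mathrm{glb}(h,h')$ is a trivial item with count $0$ (and estimate $0$). Stream: updates $(e,c)$, $e$ fully specified, $c$ a positive integer; $N$ is the sum of all $c$ ($N>0$). Space Saving with $m$ counters: maintains at most $m$ items with counters and error values; on $(i,c)$, a tracked $i$ has its counter increased by $c$;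 otherwise if fewer than $m$ items are tracked $i$ is added with counter $c$, error $0$; otherwise an item $j$ with the smallest counter is replaced by $i$ with counter $c(j)+c$ and error $c(j)$. Estimates: tracked $i$: $f_{\max}(i)=c(i)$, $f_{\min}(i)=c(i)-\mathrm{err}(i)$; untracked: $f_{\min}(i)=0$, $f_{\max}(i)=$ smallest counter (or $0$ if fewer than $m$ items are tracked). Algorithm: one Space Saving instance with $1/\epsilon$ counters per label; on update $(e,c)$, for every prefix $p$ with $e\preceq p$ feed $(p,c)$ to the instance of $p$'s label; $f_{\min}(p),f_{\max}(p)$ are that instance's estimates. Output procedure with threshold $\phi$: $P=\emptyset$; for levels $l=L,L-1,\dots,0$, for each prefix $p$ at level $l$: let $H_p=\{h\in P: h\prec p,\ \nexists h'\in P \text{ with } h\prec h'\prec p\}$; set $F'_p=f_{\max}(p)-\sum_{h\in H_p}f_{\min}(h)+\sum f_{\max}(q)$, where the last sum is over unordered pairs $\{h,h'\}$ of distinct elements of $H_p$ with $q=\mathrm{glb}(h,h')$ such that there is no $h_3\in H_p\setminus\{h,h'\}$ with $q\preceq h_3$; if $F'_p\ge\phi N$, add $p$ to $P$ and output $p$ with $f_{\min}(p),f_{\max}(p)$. *)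

theory Defs
  imports Complex_Main "HOL-Library.Sublist"
begin

text \<open>A node of a rooted tree is represented by the path (list of child labels) from the
root; ancestors are list prefixes, depth is length.\<close>

definition is_tree :: "'a list set \<Rightarrow> nat \<Rightarrow> bool" where
  "is_tree T h \<longleftrightarrow> finite T \<and> [] \<in> T \<and> (\<forall>x\<in>T. \<forall>y. prefix y x \<longrightarrow> y \<in> T)
     \<and> (\<forall>x\<in>T. length x \<le> h) \<and> (\<forall>x\<in>T. length x < h \<longrightarrow> (\<exists>a. x @ [a] \<in> T))"

type_synonym 'a pfx = "'a list \<times> 'a list"

definition pleq :: "'a pfx \<Rightarrow> 'a pfx \<Rightarrow> bool" where
  "pleq e p \<longleftrightarrow> prefix (fst p) (fst e) \<and> prefix (snd p) (snd e)"

definition pless :: "'a pfx \<Rightarrow> 'a pfx \<Rightarrow> bool" where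
  "pless e p \<longleftrightarrow> pleq e p \<and> e \<noteq> p"

definition label :: "'a pfx \<Rightarrow> nat \<times> nat" where
  "label p = (length (fst p), length (snd p))"

definition level :: "'a pfx \<Rightarrow> nat" where
  "level p = length (fst p) + length (snd p)"

text \<open>Greatest lower bound; None is the trivial item (count 0, estimate 0).\<close>
definition deeper :: "'a list \<Rightarrow> 'a list \<Rightarrow> 'a list" where
  "deeper x y = (if prefix x y then y else x)"

definition glb :: "'a pfx \<Rightarrow> 'a pfx \<Rightarrow> 'a pfx option" where
  "glb h h' = (if (prefix (fst h) (fst h') \<or> prefix (fst h') (fst h))
                 \<and> (prefix (snd h) (snd h') \<or> prefix (snd h') (snd h))
               then Some (deeper (fst h) (fst h'), deeper (snd h) (snd h')) else None)"

text \<open>State: tracked items map to (counter, error). Tie-breaking among items with the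
smallest counter is arbitrary, so a step is a relation.\<close>
type_synonym 'k ss_state = "'k \<Rightarrow> (nat \<times> nat) option"

definition ss_step :: "nat \<Rightarrow> 'k ss_state \<Rightarrow> 'k \<times> nat \<Rightarrow> 'k ss_state \<Rightarrow> bool" where
  "ss_step m S u S' \<longleftrightarrow> (case u of (i, c) \<Rightarrow>
     (case S i of
        Some (cnt, err) \<Rightarrow> S' = S(i \<mapsto> (cnt + c, err))
      | None \<Rightarrow>
          (if card (dom S) < m then S' = S(i \<mapsto> (c, 0))
           else (\<exists>j cj ej. S j = Some (cj, ej)
                   \<and> (\<forall>k ck ek. S k = Some (ck, ek) \<longrightarrow> cj \<le> ck)
                   \<and> S' = (S(j := None))(i \<mapsto> (cj + c, cj))))))"

definition ss_fmax :: "nat \<Rightarrow> 'k ss_state \<Rightarrow> 'k \<Rightarrow> nat" where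
  "ss_fmax m S i = (case S i of
      Some (cnt, err) \<Rightarrow> cnt
    | None \<Rightarrow> (if card (dom S) < m then 0 else Min {cnt. \<exists>k err. S k = Some (cnt, err)}))"

definition ss_fmin :: "nat \<Rightarrow> 'k ss_state \<Rightarrow> 'k \<Rightarrow> nat" where
  "ss_fmin m S i = (case S i of Some (cnt, err) \<Rightarrow> cnt - err | None \<Rightarrow> 0)"

text \<open>On update (e,c)
the unique prefix p with e \<preceq> p and label (d1,d2), i.e. (take d1 e1, take d2 e2),
is fed with count c to instance (d1,d2).\<close>
type_synonym 'a alg_state = "nat \<times> nat \<Rightarrow> 'a pfx ss_state"

definition alg_step :: "nat \<Rightarrow> nat \<Rightarrow> nat \<Rightarrow> 'a alg_state \<Rightarrow> 'a pfx \<times> nat \<Rightarrow> 'a alg_state \<Rightarrow> bool" where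
  "alg_step h1 h2 m st u st' \<longleftrightarrow> (case u of ((e1, e2), c) \<Rightarrow>
     (\<forall>d1 d2. if d1 \<le> h1 \<and> d2 \<le> h2
        then ss_step m (st (d1, d2)) ((take d1 e1, take d2 e2), c) (st' (d1, d2))
        else st' (d1, d2) = st (d1, d2)))"

inductive alg_run :: "nat \<Rightarrow> nat \<Rightarrow> nat \<Rightarrow> 'a alg_state \<Rightarrow> ('a pfx \<times> nat) list \<Rightarrow> 'a alg_state \<Rightarrow> bool"
  for h1 h2 m where
  run_Nil: "alg_run h1 h2 m st [] st"
| run_Cons: "alg_step h1 h2 m st u st' \<Longrightarrow> alg_run h1 h2 m st' us st'' \<Longrightarrow> alg_run h1 h2 m st (u # us) st''"

definition est_fmax :: "nat \<Rightarrow> 'a alg_state \<Rightarrow> 'a pfx \<Rightarrow> real" where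
  "est_fmax m st p = real (ss_fmax m (st (label p)) p)"

definition est_fmin :: "nat \<Rightarrow> 'a alg_state \<Rightarrow> 'a pfx \<Rightarrow> real" where
  "est_fmin m st p = real (ss_fmin m (st (label p)) p)"

definition Hset :: "'a pfx set \<Rightarrow> 'a pfx \<Rightarrow> 'a pfx set" where
  "Hset P p = {h \<in> P. pless h p \<and> \<not> (\<exists>h'\<in>P. pless h h' \<and> pless h' p)}"

definition pair_term :: "('a pfx \<Rightarrow> real) \<Rightarrow> 'a pfx set \<Rightarrow> 'a pfx \<Rightarrow> 'a pfx \<Rightarrow> real" where
  "pair_term fmax H h h' = (case glb h h' of
       None \<Rightarrow> 0
     | Some q \<Rightarrow> if \<not> (\<exists>h3 \<in> H - {h, h'}. pleq q h3) then fmax q else 0)"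

text \<open>The sum over unordered pairs of distinct elements is written as half the sum
over ordered pairs (the summand is symmetric).\<close>
definition Fprime :: "('a pfx \<Rightarrow> real) \<Rightarrow> ('a pfx \<Rightarrow> real) \<Rightarrow> 'a pfx set \<Rightarrow> 'a pfx \<Rightarrow> real" where
  "Fprime fmin fmax P p = (let H = Hset P p in
      fmax p - (\<Sum>h\<in>H. fmin h)
      + (\<Sum>(h, h')\<in>{(h, h'). h \<in> H \<and> h' \<in> H \<and> h \<noteq> h'}. pair_term fmax H h h') / 2)"

text \<open>out_acc n = output after processing levels L, L-1, ..., L-n+1.
Prefixes added at the same level cannot be strictly below one another, so the order
within a level is irrelevant.\<close>
primrec out_acc :: "'a list set \<Rightarrow> 'a list set \<Rightarrow> nat \<Rightarrow> real \<Rightarrow> ('a pfx \<Rightarrow> real)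
     \<Rightarrow> ('a pfx \<Rightarrow> real) \<Rightarrow> nat \<Rightarrow> 'a pfx set" where
  "out_acc T1 T2 L thr fmin fmax 0 = {}"
| "out_acc T1 T2 L thr fmin fmax (Suc n) =
     (let P = out_acc T1 T2 L thr fmin fmax n in
      P \<union> {p \<in> T1 \<times> T2. level p = L - n \<and> Fprime fmin fmax P p \<ge> thr})"

definition hhh_output :: "'a list set \<Rightarrow> 'a list set \<Rightarrow> nat \<Rightarrow> nat \<Rightarrow> nat \<Rightarrow> 'a alg_state
     \<Rightarrow> real \<Rightarrow> real \<Rightarrow> 'a pfx set" where
  "hhh_output T1 T2 h1 h2 m st \<phi> N =
     out_acc T1 T2 (h1 + h2) (\<phi> * N) (est_fmin m st) (est_fmax m st) (h1 + h2 + 1)"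

end

theory Submission
  imports Defs
begin

text \<open>Let f be the exact frequency of a prefix and N the total count of the stream. Every Space
Saving instance sees the whole stream, so its estimates satisfy f_max - N/m \<le> f \<le> f_min + N/m.
Call a set X of prefixes heavy if F'_X(p) \<ge> \<phi>N for all p \<in> X; the output is heavy, since
prefixes added later lie on lower levels and do not change the sets H_p of earlier ones.

For exact counts F' is linear in the stream, and a single update e contributes 1 - |S| + |D|/2 at
p, where S is the set of elements of H_p above e and D the set of pairs counted. The ancestors of
e form a product of two chains, so S is ordered with one depth increasing and the other
decreasing, and only neighbours in this order have a glb below no third element; thus
|D| \<le> 2(|S| - 1). Hence e contributes only at prefixes above e with no element of H_p above e,
which form an antichain above e of at most A elements. Together with the estimation error, a
heavy set X satisfies \<phi>N|X| \<le> AN + |X|(1 + |X| + |X|^2)N/m. For K = \<lfloor>A/\<phi>\<rfloor> no heavy set has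
K + 1 elements once 1/m is small, so the output, which grows one level at a time, has at most
K \<le> A/\<phi> elements; and A/\<phi> is below the stated bound, which equals 2A/(x + \<surd>(x^2 - A^2\<epsilon>))
for x = \<phi> - (1 + A)\<epsilon>.\<close>

section \<open>Space Saving\<close>

definition ss_total :: "'k ss_state \<Rightarrow> nat" where
  "ss_total S = (\<Sum>k\<in>dom S. fst (the (S k)))"

definition below_counters :: "'k ss_state \<Rightarrow> nat \<Rightarrow> bool" where
  "below_counters S x \<longleftrightarrow> (\<forall>k c e. S k = Some (c, e) \<longrightarrow> x \<le> c)"

text \<open>f i is the total count fed to the instance for item i.\<close>

definition ss_inv :: "nat \<Rightarrow> 'k ss_state \<Rightarrow> ('k \<Rightarrow> nat) \<Rightarrow> bool" where
  "ss_inv m S f \<longleftrightarrow> finite (dom S) \<and> card (dom S) \<le> m \<and>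
     (\<forall>i c e. S i = Some (c, e) \<longrightarrow> f i \<le> c \<and> c \<le> f i + e \<and> below_counters S e
        \<and> (card (dom S) < m \<longrightarrow> e = 0)) \<and>
     (\<forall>i. S i = None \<longrightarrow> below_counters S (f i) \<and> (card (dom S) < m \<longrightarrow> f i = 0))"

lemma ss_total_update:
  assumes "finite (dom S)"
  shows "ss_total (S(i \<mapsto> v)) = ss_total (S(i := None)) + fst v"
proof -
  have "ss_total (S(i \<mapsto> v)) = fst v + (\<Sum>k\<in>dom S - {i}. fst (the ((S(i \<mapsto> v)) k)))"
    using assms by (simp add: ss_total_def sum.insert_remove)
  also have "(\<Sum>k\<in>dom S - {i}. fst (the ((S(i \<mapsto> v)) k))) = ss_total (S(i := None))"
    unfolding ss_total_def by (intro sum.cong) auto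
  finally show ?thesis by linarith
qed

lemma ss_total_remove:
  assumes "finite (dom S)" and "S j = Some v"
  shows "ss_total S = ss_total (S(j := None)) + fst v"
  using ss_total_update[OF assms(1), of j v] assms(2) by (simp add: fun_upd_idem)

lemma ss_inv_increment:
  assumes inv: "ss_inv m S f" and Si: "S i = Some (c0, e0)"
  shows "ss_inv m (S(i \<mapsto> (c0 + c, e0))) (f(i := f i + c))"
proof -
  have "dom (S(i \<mapsto> (c0 + c, e0))) = dom S" using Si by auto
  moreover have "below_counters (S(i \<mapsto> (c0 + c, e0))) x" if "below_counters S x" for x
    using that Si unfolding below_counters_def by (auto intro: le_trans[OF _ le_add1])
  ultimately show ?thesis
    using inv Si unfolding ss_inv_def by (auto simp del: dom_fun_upd)
qed

lemma ss_inv_insert: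
  assumes inv: "ss_inv m S f" and Si: "S i = None" and room: "card (dom S) < m"
  shows "ss_inv m (S(i \<mapsto> (c, 0))) (f(i := f i + c))"
proof -
  have errors: "e = 0" if "S k = Some (c', e)" for k c' e
    using inv room that unfolding ss_inv_def by blast
  have "f i = 0" using inv Si room unfolding ss_inv_def by blast
  moreover have "f k = 0" if "S k = None" for k
    using inv room that unfolding ss_inv_def by blast
  moreover have "card (dom (S(i \<mapsto> (c, 0)))) = Suc (card (dom S))"
    using inv Si unfolding ss_inv_def by (simp add: domIff)
  ultimately show ?thesis
    using inv room errors unfolding ss_inv_def below_counters_def by auto
qed

lemma ss_inv_replace:
  assumes inv: "ss_inv m S f" and Si: "S i = None" and full: "\<not> card (dom S) < m"
    and Sj: "S j = Some (cj, ej)" and min: "below_counters S cj"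
  shows "ss_inv m ((S(j := None))(i \<mapsto> (cj + c, cj))) (f(i := f i + c))"
proof -
  let ?S' = "(S(j := None))(i \<mapsto> (cj + c, cj))"
  have fin: "finite (dom S)" and card: "card (dom S) = m"
    using inv full unfolding ss_inv_def by auto
  have dom': "dom ?S' = insert i (dom S - {j})" by auto
  then have card': "card (dom ?S') = m"
    using fin card Si Sj by (simp add: domIff) (metis Suc_pred card_gt_0_iff domI empty_iff)
  have below': "below_counters ?S' x" if "x \<le> cj" for x
    using min that unfolding below_counters_def by (fastforce split: if_splits)
  have "f i \<le> cj" "f j \<le> cj" using inv Si full Sj unfolding ss_inv_def below_counters_def by blast+
  moreover have "e \<le> cj" if "S k = Some (c', e)" for k c' e
    using inv Sj that unfolding ss_inv_def below_counters_def by blast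
  moreover have "f k \<le> cj" if "S k = None" for k
    using inv Sj that full unfolding ss_inv_def below_counters_def by blast
  ultimately show ?thesis
    using inv full card' below' fin unfolding ss_inv_def dom' by (auto simp del: dom_fun_upd)
qed

lemma ss_inv_step:
  assumes step: "ss_step m S (i, c) S'" and inv: "ss_inv m S f"
  shows "ss_inv m S' (f(i := f i + c))" and "ss_total S' = ss_total S + c"
proof -
  have fin: "finite (dom S)" using inv unfolding ss_inv_def by blast
  have "ss_inv m S' (f(i := f i + c)) \<and> ss_total S' = ss_total S + c"
  proof (cases "S i")
    case None
    show ?thesis
    proof (cases "card (dom S) < m")
      case True
      then have "S' = S(i \<mapsto> (c, 0))" using step None unfolding ss_step_def by simp
      then show ?thesis
        using ss_inv_insert[OF inv None True] ss_total_update[OF fin] None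
        by (simp add: fun_upd_idem)
    next
      case False
      then obtain j cj ej where Sj: "S j = Some (cj, ej)" and min: "below_counters S cj"
        and S': "S' = (S(j := None))(i \<mapsto> (cj + c, cj))"
        using step None unfolding ss_step_def below_counters_def by auto
      have "(S(j := None))(i := None) = S(j := None)" using None by auto
      then show ?thesis
        using ss_inv_replace[OF inv None False Sj min] S' ss_total_remove[OF fin Sj]
          ss_total_update[of "S(j := None)" i] fin
        by simp
    qed
  next
    case (Some v)
    obtain c0 e0 where v: "v = (c0, e0)" by (cases v)
    then have "S' = S(i \<mapsto> (c0 + c, e0))" using step Some unfolding ss_step_def by simp
    then show ?thesis
      using ss_inv_increment[of m S f i c0 e0 c] inv Some v
        ss_total_update[OF fin] ss_total_remove[OF fin, of i]
      by simp
  qed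
  then show "ss_inv m S' (f(i := f i + c))" and "ss_total S' = ss_total S + c" by auto
qed

lemma ss_slack_le:
  assumes inv: "ss_inv m S f" and m: "0 < m"
    and below: "below_counters S x" and empty_slack: "card (dom S) < m \<Longrightarrow> x = 0"
  shows "real x \<le> real (ss_total S) / real m"
proof (cases "card (dom S) < m")
  case False
  then have "card (dom S) = m" using inv unfolding ss_inv_def by simp
  moreover have "card (dom S) * x \<le> ss_total S"
    unfolding ss_total_def using below
    by (intro sum_bounded_below[where K = x, simplified]) (fastforce simp: below_counters_def)
  ultimately have "real m * real x \<le> real (ss_total S)" by (metis of_nat_le_iff of_nat_mult)
  then show ?thesis using m by (simp add: field_simps)
qed (simp add: empty_slack)

lemma ss_fmax_le:
  assumes inv: "ss_inv m S f" and m: "0 < m"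
  shows "real (ss_fmax m S i) \<le> real (f i) + real (ss_total S) / real m"
proof (cases "S i")
  case None
  show ?thesis
  proof (cases "card (dom S) < m")
    case False
    let ?C = "{c. \<exists>k e. S k = Some (c, e)}"
    have "?C = (\<lambda>k. fst (the (S k))) ` dom S" by force
    then have "finite ?C" using inv unfolding ss_inv_def by simp
    then have "below_counters S (Min ?C)" unfolding below_counters_def by (auto intro: Min_le)
    then have "real (Min ?C) \<le> real (ss_total S) / real m" using ss_slack_le[OF inv m] False by blast
    then show ?thesis using None False unfolding ss_fmax_def by simp
  qed (simp add: ss_fmax_def None)
next
  case (Some v)
  obtain c e where v: "v = (c, e)" by (cases v)
  then have "c \<le> f i + e" and "below_counters S e" and "card (dom S) < m \<Longrightarrow> e = 0"
    using inv Some unfolding ss_inv_def by blast+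
  then show ?thesis
    using ss_slack_le[OF inv m, of e] Some v unfolding ss_fmax_def by simp
qed

lemma ss_fmin_ge:
  assumes inv: "ss_inv m S f" and m: "0 < m"
  shows "real (f i) \<le> real (ss_fmin m S i) + real (ss_total S) / real m"
proof (cases "S i")
  case None
  then have "below_counters S (f i)" and "card (dom S) < m \<Longrightarrow> f i = 0"
    using inv unfolding ss_inv_def by blast+
  then show ?thesis using ss_slack_le[OF inv m] None unfolding ss_fmin_def by simp
next
  case (Some v)
  obtain c e where v: "v = (c, e)" by (cases v)
  then have "f i \<le> c" and "below_counters S e" and "card (dom S) < m \<Longrightarrow> e = 0"
    using inv Some unfolding ss_inv_def by blast+
  moreover have "e \<le> c" using \<open>below_counters S e\<close> Some v unfolding below_counters_def by blast
  ultimately show ?thesis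
    using ss_slack_le[OF inv m, of e] Some v unfolding ss_fmin_def by simp
qed

section \<open>Error of the estimates\<close>

definition freq :: "('a pfx \<times> nat) list \<Rightarrow> 'a pfx \<Rightarrow> nat" where
  "freq xs q = sum_list (map (\<lambda>(e, c). if pleq e q then c else 0) xs)"

definition fed_count :: "nat \<Rightarrow> nat \<Rightarrow> ('a pfx \<times> nat) list \<Rightarrow> 'a pfx \<Rightarrow> nat" where
  "fed_count d1 d2 xs p =
     sum_list (map (\<lambda>(e, c). if (take d1 (fst e), take d2 (snd e)) = p then c else 0) xs)"

definition alg_inv :: "nat \<Rightarrow> nat \<Rightarrow> nat \<Rightarrow> 'a alg_state \<Rightarrow> ('a pfx \<times> nat) list \<Rightarrow> bool" where
  "alg_inv h1 h2 m st xs \<longleftrightarrow> (\<forall>d1 d2.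
     (d1 \<le> h1 \<and> d2 \<le> h2 \<longrightarrow> ss_inv m (st (d1, d2)) (fed_count d1 d2 xs)
        \<and> ss_total (st (d1, d2)) = sum_list (map snd xs)) \<and>
     (\<not> (d1 \<le> h1 \<and> d2 \<le> h2) \<longrightarrow> st (d1, d2) = Map.empty))"

lemma alg_inv_init: "alg_inv h1 h2 m (\<lambda>_. Map.empty) []"
  by (simp add: alg_inv_def ss_inv_def ss_total_def fed_count_def below_counters_def)

lemma fed_count_snoc:
  "fed_count d1 d2 (xs @ [((e1, e2), c)]) =
     (fed_count d1 d2 xs)((take d1 e1, take d2 e2) := fed_count d1 d2 xs (take d1 e1, take d2 e2) + c)"
  by (auto simp: fed_count_def fun_eq_iff)

lemma alg_run_inv:
  assumes "alg_run h1 h2 m st us st'" and "alg_inv h1 h2 m st xs"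
  shows "alg_inv h1 h2 m st' (xs @ us)"
  using assms
proof (induction arbitrary: xs rule: alg_run.induct)
  case (run_Cons st u st' us st'')
  obtain e1 e2 c where u: "u = ((e1, e2), c)" by (metis prod.collapse)
  have "alg_inv h1 h2 m st' (xs @ [u])"
    unfolding alg_inv_def
  proof (intro allI conjI impI)
    fix d1 d2 assume "d1 \<le> h1 \<and> d2 \<le> h2"
    then have step: "ss_step m (st (d1, d2)) ((take d1 e1, take d2 e2), c) (st' (d1, d2))"
      and inv: "ss_inv m (st (d1, d2)) (fed_count d1 d2 xs)"
      and total: "ss_total (st (d1, d2)) = sum_list (map snd xs)"
      using run_Cons.hyps(1) run_Cons.prems u unfolding alg_step_def alg_inv_def by auto
    show "ss_inv m (st' (d1, d2)) (fed_count d1 d2 (xs @ [u]))"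
      and "ss_total (st' (d1, d2)) = sum_list (map snd (xs @ [u]))"
      using ss_inv_step[OF step inv] total u by (simp_all add: fed_count_snoc)
  next
    fix d1 d2 assume "\<not> (d1 \<le> h1 \<and> d2 \<le> h2)"
    then show "st' (d1, d2) = Map.empty"
      using run_Cons.hyps(1) run_Cons.prems u unfolding alg_step_def alg_inv_def by auto
  qed
  then show ?case using run_Cons.IH by fastforce
qed simp

lemma prefix_iff_take: "prefix x y \<longleftrightarrow> take (length x) y = x"
  by (metis prefix_def take_is_prefix append_eq_conv_conj)

lemma fed_count_label: "fed_count (length (fst q)) (length (snd q)) xs q = freq xs q"
proof -
  have "((take (length (fst q)) (fst e), take (length (snd q)) (snd e)) = q) = pleq e q" for e
    by (cases q) (auto simp: pleq_def prefix_iff_take)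
  then show ?thesis unfolding fed_count_def freq_def by simp
qed

lemma freq_conv_sum:
  "real (freq xs q) = (\<Sum>i<length xs. real (snd (xs ! i)) * of_bool (pleq (fst (xs ! i)) q))"
  unfolding freq_def sum_list_sum_nth atLeast0LessThan of_nat_sum
  by (intro sum.cong) (auto simp: case_prod_beta)

lemma est_error_bounds:
  assumes run: "alg_run h1 h2 m (\<lambda>_. Map.empty) xs st" and m: "0 < m"
    and depths: "\<forall>(e, c) \<in> set xs. length (fst e) = h1 \<and> length (snd e) = h2"
  shows "est_fmax m st q \<le> real (freq xs q) + real (sum_list (map snd xs)) / real m"
    and "real (freq xs q) \<le> est_fmin m st q + real (sum_list (map snd xs)) / real m"
proof -
  have inv: "alg_inv h1 h2 m st xs" using alg_run_inv[OF run alg_inv_init] by simp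
  have "est_fmax m st q \<le> real (freq xs q) + real (sum_list (map snd xs)) / real m
    \<and> real (freq xs q) \<le> est_fmin m st q + real (sum_list (map snd xs)) / real m"
  proof (cases "length (fst q) \<le> h1 \<and> length (snd q) \<le> h2")
    case True
    then have ss: "ss_inv m (st (label q)) (fed_count (length (fst q)) (length (snd q)) xs)"
      and "ss_total (st (label q)) = sum_list (map snd xs)"
      using inv unfolding alg_inv_def label_def by auto
    then show ?thesis
      using ss_fmax_le[OF ss m, of q] ss_fmin_ge[OF ss m, of q]
      unfolding est_fmax_def est_fmin_def fed_count_label by simp
  next
    case False
    then have "st (label q) = Map.empty" using inv unfolding alg_inv_def label_def by auto
    moreover have "\<not> pleq e q" if "(e, c) \<in> set xs" for e c
      using False depths that prefix_length_le unfolding pleq_def by fastforce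
    then have "freq xs q = 0" unfolding freq_def by fastforce
    ultimately show ?thesis using m by (simp add: est_fmax_def est_fmin_def ss_fmax_def ss_fmin_def)
  qed
  then show "est_fmax m st q \<le> real (freq xs q) + real (sum_list (map snd xs)) / real m"
    and "real (freq xs q) \<le> est_fmin m st q + real (sum_list (map snd xs)) / real m" by auto
qed

section \<open>Ancestors of a fully specified item\<close>

lemma pleq_refl [simp]: "pleq x x"
  unfolding pleq_def by simp

lemma pleq_trans: "pleq a b \<Longrightarrow> pleq b c \<Longrightarrow> pleq a c"
  unfolding pleq_def by (meson prefix_order.order_trans)

lemma pleq_antisym: "pleq a b \<Longrightarrow> pleq b a \<Longrightarrow> a = b"
  unfolding pleq_def by (simp add: prefix_order.antisym prod_eq_iff)

lemma pleq_iff_lengths: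
  assumes "pleq e h" and "pleq e h'"
  shows "pleq h h' \<longleftrightarrow> length (fst h') \<le> length (fst h) \<and> length (snd h') \<le> length (snd h)"
  using assms unfolding pleq_def by (meson prefix_length_le prefix_length_prefix)

lemma pless_level:
  assumes "pless a b"
  shows "level b < level a"
proof -
  have ab: "pleq a b" and "a \<noteq> b" using assms unfolding pless_def by auto
  then have "\<not> pleq b a" using pleq_antisym by blast
  then show ?thesis
    using pleq_iff_lengths[OF pleq_refl ab] pleq_iff_lengths[OF ab pleq_refl] ab
    unfolding level_def by auto
qed

lemma glb_below: "glb h h' = Some q \<Longrightarrow> pleq q h \<and> pleq q h'"
  unfolding glb_def deeper_def pleq_def by (auto split: if_splits)

lemma glb_above:
  assumes "pleq e h" and "pleq e h'"
  obtains q where "glb h h' = Some q" and "pleq e q"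
    and "length (fst q) = max (length (fst h)) (length (fst h'))"
    and "length (snd q) = max (length (snd h)) (length (snd h'))"
proof -
  have deeper: "prefix x y \<or> prefix y x"
    "prefix (deeper x y) z" "length (deeper x y) = max (length x) (length y)"
    if "prefix x z" "prefix y z" for x y z :: "'a list"
    using that prefix_length_prefix[OF that] prefix_length_prefix[OF that(2,1)] prefix_same_cases
    unfolding deeper_def by (auto simp: max_def dest: prefix_length_le)
  show ?thesis
    using that assms deeper[of "fst h" "fst e" "fst h'"] deeper[of "snd h" "snd e" "snd h'"]
    unfolding glb_def pleq_def by simp
qed

lemma glb_pleq_of_lengths:
  assumes "pleq e h" "pleq e h'" "pleq e h''"
    and "length (fst h'') \<le> max (length (fst h)) (length (fst h'))"
    and "length (snd h'') \<le> max (length (snd h)) (length (snd h'))"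
  obtains q where "glb h h' = Some q" and "pleq q h''"
proof -
  obtain q where "glb h h' = Some q" "pleq e q"
    "length (fst q) = max (length (fst h)) (length (fst h'))"
    "length (snd q) = max (length (snd h)) (length (snd h'))"
    using glb_above[OF assms(1,2)] by blast
  then show ?thesis using that assms(3-5) pleq_iff_lengths[of e q h''] by auto
qed

lemma incomparable_above_cases:
  assumes "pleq e h" and "pleq e h'" and "pleq h h' \<or> pleq h' h \<Longrightarrow> h = h'"
  obtains "h = h'"
  | "length (fst h) < length (fst h')" and "length (snd h') < length (snd h)"
  | "length (fst h') < length (fst h)" and "length (snd h) < length (snd h')"
  using assms pleq_iff_lengths[OF assms(1,2)] pleq_iff_lengths[OF assms(2,1)] by fastforce

lemma card_antichain_above_le:
  assumes above: "\<And>h. h \<in> B \<Longrightarrow> pleq e h"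
    and antichain: "\<And>h h'. h \<in> B \<Longrightarrow> h' \<in> B \<Longrightarrow> pleq h h' \<Longrightarrow> h = h'"
  shows "card B \<le> 1 + min (length (fst e)) (length (snd e))"
proof -
  have "card B \<le> Suc (length (f e))" if f: "f = fst \<or> f = snd" for f :: "'a pfx \<Rightarrow> 'a list"
  proof -
    have "inj_on (\<lambda>h. length (f h)) B"
    proof (rule inj_onI)
      fix h h' assume hB: "h \<in> B" "h' \<in> B" and "length (f h) = length (f h')"
      show "h = h'"
        by (rule incomparable_above_cases[OF above[OF hB(1)] above[OF hB(2)]])
          (use antichain[OF hB(1,2)] antichain[OF hB(2,1)] f \<open>length (f h) = length (f h')\<close> in auto)
    qed
    then have "card B = card ((\<lambda>h. length (f h)) ` B)" by (simp add: card_image)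
    also have "\<dots> \<le> card {0..length (f e)}"
      using above f prefix_length_le unfolding pleq_def by (intro card_mono) fastforce+
    finally show ?thesis by simp
  qed
  from this[of fst] this[of snd] show ?thesis by simp
qed

lemma card_adjacent_pairs_le:
  fixes k :: "'a \<Rightarrow> 'b::linorder"
  assumes fin: "finite S" and inj: "inj_on k S"
    and D: "\<And>x y. (x, y) \<in> D \<Longrightarrow> x \<in> S \<and> y \<in> S \<and> k x < k y \<and> \<not> (\<exists>z\<in>S. k x < k z \<and> k z < k y)"
  shows "card D \<le> card S - 1"
proof (cases "S = {}")
  case False
  have "Max (k ` S) \<in> k ` S" using fin False by simp
  then obtain top where top: "top \<in> S" "k top = Max (k ` S)" by auto
  have "inj_on fst D"
  proof (rule inj_onI)
    fix u v assume u: "u \<in> D" and v: "v \<in> D" and "fst u = fst v"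
    then obtain x y y' where "u = (x, y)" "v = (x, y')" by (metis prod.collapse)
    then have "k y = k y'" using D[of x y] D[of x y'] u v by (meson linorder_neqE)
    then show "u = v" using D[of x y] D[of x y'] u v \<open>u = (x, y)\<close> \<open>v = (x, y')\<close> inj
      by (simp add: inj_on_eq_iff)
  qed
  then have "card D = card (fst ` D)" by (simp add: card_image)
  also have "\<dots> \<le> card (S - {top})"
  proof (intro card_mono)
    show "fst ` D \<subseteq> S - {top}"
    proof
      fix x assume "x \<in> fst ` D"
      then obtain y where "(x, y) \<in> D" by force
      then have "x \<in> S" and "k x < k y" and "y \<in> S" using D by blast+
      moreover have "k y \<le> k top" using \<open>y \<in> S\<close> top fin by simp
      ultimately show "x \<in> S - {top}" by auto
    qed
  qed (use fin in simp)
  finally show ?thesis using top fin by simp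
next
  case True
  then have "D = {}" using D by fast
  then show ?thesis by simp
qed

text \<open>An antichain above e is ordered by the depth k of its first coordinate, the second depth
decreasing; the glb of two elements lies below every element between them in this order, so only
neighbours can count.\<close>

lemma card_glb_pairs_le:
  assumes fin: "finite S" and above: "\<And>h. h \<in> S \<Longrightarrow> pleq e h"
    and antichain: "\<And>h h'. h \<in> S \<Longrightarrow> h' \<in> S \<Longrightarrow> pleq h h' \<Longrightarrow> h = h'"
    and D: "\<And>h h'. (h, h') \<in> D \<Longrightarrow> h \<in> S \<and> h' \<in> S \<and> h \<noteq> h'
       \<and> (\<forall>h'' \<in> S - {h, h'}. \<exists>q. glb h h' = Some q \<and> \<not> pleq q h'')"
  shows "card D \<le> 2 * (card S - 1)"
proof -
  define k where "k h = length (fst h)" for h :: "'a pfx"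
  have cases: "h = h' \<or> (k h < k h' \<and> length (snd h') < length (snd h))
      \<or> (k h' < k h \<and> length (snd h) < length (snd h'))" if "h \<in> S" "h' \<in> S" for h h'
    by (rule incomparable_above_cases[OF above[OF that(1)] above[OF that(2)]])
      (use antichain[OF that] antichain[OF that(2,1)] k_def in auto)
  have inj: "inj_on k S" using cases by (fastforce intro: inj_onI)
  have adjacent: "\<not> (min (k h) (k h') < k h'' \<and> k h'' < max (k h) (k h'))"
    if hD: "(h, h') \<in> D" and h'': "h'' \<in> S" for h h' h''
  proof
    assume between: "min (k h) (k h') < k h'' \<and> k h'' < max (k h) (k h')"
    have hS: "h \<in> S" "h' \<in> S" "h'' \<in> S - {h, h'}" using D[OF hD] h'' between by auto
    have "length (fst h'') \<le> max (length (fst h)) (length (fst h'))"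
      using between unfolding k_def by simp
    moreover have "length (snd h'') \<le> max (length (snd h)) (length (snd h'))"
      using cases[OF hS(1) h''] cases[OF hS(2) h''] between by auto
    ultimately obtain q where "glb h h' = Some q" and "pleq q h''"
      using glb_pleq_of_lengths[OF above[OF hS(1)] above[OF hS(2)] above[OF h'']] by blast
    then show False using D[OF hD] hS(3) by auto
  qed
  let ?D1 = "{x \<in> D. k (fst x) < k (snd x)}" and ?D2 = "{x \<in> D. k (snd x) < k (fst x)}"
  have "card ?D1 \<le> card S - 1"
    by (rule card_adjacent_pairs_le[OF fin inj]) (use D adjacent in fastforce)
  moreover have "card ?D2 = card (prod.swap ` ?D2)" by (simp add: card_image)
  moreover have "card (prod.swap ` ?D2) \<le> card S - 1"
    by (rule card_adjacent_pairs_le[OF fin inj]) (use D adjacent in fastforce)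
  moreover have "D = ?D1 \<union> ?D2"
  proof (intro subset_antisym subsetI)
    fix x assume "x \<in> D"
    then have "k (fst x) \<noteq> k (snd x)" using D[of "fst x" "snd x"] inj by (auto simp: inj_on_eq_iff)
    then show "x \<in> ?D1 \<union> ?D2" using \<open>x \<in> D\<close> by auto
  qed auto
  then have "card D \<le> card ?D1 + card ?D2" using card_Un_le[of ?D1 ?D2] by (rule ssubst)
  ultimately show ?thesis by linarith
qed

section \<open>The output quantity F'\<close>

lemma Hset_subset: "Hset Q p \<subseteq> Q"
  unfolding Hset_def by auto

lemma Hset_antichain: "h \<in> Hset Q p \<Longrightarrow> h' \<in> Hset Q p \<Longrightarrow> pleq h h' \<Longrightarrow> h = h'"
  unfolding Hset_def pless_def by auto

lemma Hset_covers:
  assumes fin: "finite Q" and "p' \<in> Q" and "pless p' p"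
  obtains h where "h \<in> Hset Q p" and "pleq p' h"
proof -
  let ?X = "{x \<in> Q. pleq p' x \<and> pless x p}"
  have "p' \<in> ?X" using assms by simp
  then obtain x where x: "x \<in> ?X" and least: "\<And>y. y \<in> ?X \<Longrightarrow> level x \<le> level y"
    using fin ex_has_least_nat[of "\<lambda>x. x \<in> ?X" p' level] by blast
  have "x \<in> Hset Q p"
    unfolding Hset_def
  proof (safe)
    show "x \<in> Q" "pless x p" using x by auto
  next
    fix h' assume "h' \<in> Q" "pless x h'" "pless h' p"
    then have "h' \<in> ?X" and "level h' < level x"
      using x pleq_trans pless_level unfolding pless_def by blast+
    then show False using least by fastforce
  qed
  then show ?thesis using x that by blast
qed

lemma card_uncovered_le:
  assumes fin: "finite Q"
  shows "card {p \<in> Q. pleq e p \<and> (\<forall>h \<in> Hset Q p. \<not> pleq e h)}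
    \<le> 1 + min (length (fst e)) (length (snd e))"
proof (rule card_antichain_above_le)
  fix p p' assume p: "p \<in> {p \<in> Q. pleq e p \<and> (\<forall>h \<in> Hset Q p. \<not> pleq e h)}"
    and p': "p' \<in> {p \<in> Q. pleq e p \<and> (\<forall>h \<in> Hset Q p. \<not> pleq e h)}" and "pleq p p'"
  show "p = p'"
  proof (rule ccontr)
    assume "p \<noteq> p'"
    then obtain h where "h \<in> Hset Q p'" and "pleq p h"
      using Hset_covers[OF fin, of p p'] p \<open>pleq p p'\<close> unfolding pless_def by blast
    then show False using p p' pleq_trans by blast
  qed
qed simp

lemma sum_pair_term_indicator:
  assumes "finite H"
  shows "(\<Sum>(h, h') \<in> {(h, h'). h \<in> H \<and> h' \<in> H \<and> h \<noteq> h'}. pair_term (\<lambda>q. of_bool (pleq e q)) H h h')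
    = real (card {(h, h'). h \<in> H \<and> h' \<in> H \<and> h \<noteq> h' \<and>
        (\<exists>q. glb h h' = Some q \<and> \<not> (\<exists>h3 \<in> H - {h, h'}. pleq q h3) \<and> pleq e q)})"
    (is "(\<Sum>(h, h') \<in> ?Pairs. _) = real (card ?D)")
proof -
  have "?Pairs \<subseteq> H \<times> H" by auto
  then have fin: "finite ?Pairs" using assms finite_subset by blast
  have "pair_term (\<lambda>q. of_bool (pleq e q)) H h h'
     = of_bool (\<exists>q. glb h h' = Some q \<and> \<not> (\<exists>h3 \<in> H - {h, h'}. pleq q h3) \<and> pleq e q)" for h h'
    unfolding pair_term_def by (auto split: option.split)
  then have "(\<Sum>(h, h') \<in> ?Pairs. pair_term (\<lambda>q. of_bool (pleq e q)) H h h')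
      = (\<Sum>x \<in> ?Pairs. of_bool (x \<in> ?D))"
    by (intro sum.cong) auto
  also have "\<dots> = real (card (?Pairs \<inter> ?D))" using fin by simp
  also have "?Pairs \<inter> ?D = ?D" by auto
  finally show ?thesis .
qed

lemma Fprime_indicator_le:
  assumes fin: "finite Q"
  shows "Fprime (\<lambda>q. of_bool (pleq e q)) (\<lambda>q. of_bool (pleq e q)) Q p
    \<le> of_bool (pleq e p \<and> (\<forall>h \<in> Hset Q p. \<not> pleq e h))"
proof -
  define H where "H = Hset Q p"
  define S where "S = {h \<in> H. pleq e h}"
  define D where "D = {(h, h'). h \<in> H \<and> h' \<in> H \<and> h \<noteq> h' \<and>
    (\<exists>q. glb h h' = Some q \<and> \<not> (\<exists>h3 \<in> H - {h, h'}. pleq q h3) \<and> pleq e q)}"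
  have finH: "finite H" using fin Hset_subset finite_subset unfolding H_def by blast
  have D_S: "(h, h') \<in> D \<Longrightarrow> h \<in> S \<and> h' \<in> S \<and> h \<noteq> h'
      \<and> (\<forall>h'' \<in> S - {h, h'}. \<exists>q. glb h h' = Some q \<and> \<not> pleq q h'')" for h h'
    unfolding D_def S_def using glb_below pleq_trans by blast
  have singles: "(\<Sum>h\<in>H. of_bool (pleq e h)) = real (card S)"
    using finH unfolding S_def by (simp add: Int_def)
  have F: "Fprime (\<lambda>q. of_bool (pleq e q)) (\<lambda>q. of_bool (pleq e q)) Q p
      = of_bool (pleq e p) - real (card S) + real (card D) / 2"
    unfolding Fprime_def Let_def H_def[symmetric] sum_pair_term_indicator[OF finH] singles D_def ..
  show ?thesis
  proof (cases "S = {}")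
    case True
    then have "D = {}" using D_S by fast
    then show ?thesis using True F unfolding S_def H_def by auto
  next
    case False
    have "card D \<le> 2 * (card S - 1)"
    proof (rule card_glb_pairs_le[where e = e, OF _ _ _ D_S])
      show "finite S" using finH by (simp add: S_def)
      show "h \<in> S \<Longrightarrow> h' \<in> S \<Longrightarrow> pleq h h' \<Longrightarrow> h = h'" for h h'
        unfolding S_def H_def using Hset_antichain by blast
    qed (simp add: S_def)
    moreover have "card S \<ge> 1" using False finH by (simp add: S_def Suc_le_eq card_gt_0_iff)
    ultimately have "real (card D) / 2 \<le> real (card S) - 1" by linarith
    then show ?thesis using F False unfolding S_def H_def by auto
  qed
qed

lemma pair_term_sum:
  "pair_term (\<lambda>q. \<Sum>i\<in>I. c i * f i q) H h h' = (\<Sum>i\<in>I. c i * pair_term (f i) H h h')"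
proof (cases "glb h h'")
  case (Some q)
  then show ?thesis unfolding pair_term_def by (cases "\<exists>h3 \<in> H - {h, h'}. pleq q h3") simp_all
qed (simp add: pair_term_def)

lemma Fprime_sum:
  "Fprime (\<lambda>q. \<Sum>i\<in>I. c i * f i q) (\<lambda>q. \<Sum>i\<in>I. c i * f i q) Q p
     = (\<Sum>i\<in>I. c i * Fprime (f i) (f i) Q p)"
proof -
  define H where "H = Hset Q p"
  define Pairs where "Pairs = {(h, h'). h \<in> H \<and> h' \<in> H \<and> h \<noteq> h'}"
  have "(\<Sum>(h, h')\<in>Pairs. \<Sum>i\<in>I. c i * pair_term (f i) H h h')
      = (\<Sum>i\<in>I. c i * (\<Sum>(h, h')\<in>Pairs. pair_term (f i) H h h'))"
    unfolding case_prod_beta by (subst sum.swap) (simp add: sum_distrib_left)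
  then show ?thesis
    unfolding Fprime_def Let_def H_def[symmetric] Pairs_def[symmetric] pair_term_sum
    by (simp add: sum.swap[of _ _ H] algebra_simps sum.distrib sum_subtractf sum_divide_distrib
        sum_distrib_left)
qed

lemma pair_term_le:
  assumes "\<And>q. f q \<le> g q + \<delta>" and "0 \<le> \<delta>"
  shows "pair_term f H h h' \<le> pair_term g H h h' + \<delta>"
  using assms by (auto simp: pair_term_def split: option.split)

lemma Fprime_perturb_le:
  assumes fin: "finite Q" and up: "\<And>q. fmax q \<le> g q + \<delta>" and lo: "\<And>q. g q \<le> fmin q + \<delta>"
    and \<delta>: "0 \<le> \<delta>"
  shows "Fprime fmin fmax Q p \<le> Fprime g g Q p + \<delta> * (1 + real (card Q) + real (card Q)^2)"
proof -
  define H where "H = Hset Q p"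
  define Pairs where "Pairs = {(h, h'). h \<in> H \<and> h' \<in> H \<and> h \<noteq> h'}"
  have finH: "finite H" and cardH: "card H \<le> card Q"
    unfolding H_def using finite_subset[OF Hset_subset fin] card_mono[OF fin Hset_subset] .
  have "Pairs \<subseteq> H \<times> H" unfolding Pairs_def by auto
  then have "card Pairs \<le> card Q * card Q"
    using finH cardH card_mono[of "H \<times> H" Pairs] by (simp add: card_cartesian_product)
      (meson mult_le_mono order.trans)
  then have cardPairs: "real (card Pairs) \<le> real (card Q)^2"
    by (simp add: power2_eq_square flip: of_nat_mult)
  have "(\<Sum>h\<in>H. g h) \<le> (\<Sum>h\<in>H. fmin h + \<delta>)" using lo by (intro sum_mono) auto
  moreover have "(\<Sum>(h, h')\<in>Pairs. pair_term fmax H h h') \<le> (\<Sum>(h, h')\<in>Pairs. pair_term g H h h' + \<delta>)"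
    using pair_term_le[OF up \<delta>] by (intro sum_mono) auto
  ultimately have "Fprime fmin fmax Q p
      \<le> Fprime g g Q p + \<delta> * (1 + real (card H) + real (card Pairs) / 2)"
    using up[of p] unfolding Fprime_def Let_def H_def[symmetric] Pairs_def[symmetric]
    by (simp add: algebra_simps sum.distrib add_divide_distrib case_prod_beta)
  also have "\<dots> \<le> Fprime g g Q p + \<delta> * (1 + real (card Q) + real (card Q)^2)"
  proof (intro add_left_mono mult_left_mono \<delta>)
    show "1 + real (card H) + real (card Pairs) / 2 \<le> 1 + real (card Q) + real (card Q)^2"
      using cardH cardPairs zero_le_power2[of "real (card Q)"] by linarith
  qed
  finally show ?thesis .
qed

lemma sum_Fprime_le:
  fixes W :: "'i \<Rightarrow> real" and E :: "'i \<Rightarrow> 'a pfx"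
  assumes finQ: "finite Q" and W: "\<And>i. i \<in> I \<Longrightarrow> 0 \<le> W i"
    and depths: "\<And>i. i \<in> I \<Longrightarrow> length (fst (E i)) = h1 \<and> length (snd (E i)) = h2"
  defines "g \<equiv> \<lambda>q. \<Sum>i\<in>I. W i * of_bool (pleq (E i) q)"
  shows "(\<Sum>p\<in>Q. Fprime g g Q p) \<le> real (1 + min h1 h2) * (\<Sum>i\<in>I. W i)"
proof -
  have "(\<Sum>p\<in>Q. Fprime g g Q p)
      = (\<Sum>i\<in>I. W i * (\<Sum>p\<in>Q. Fprime (\<lambda>q. of_bool (pleq (E i) q)) (\<lambda>q. of_bool (pleq (E i) q)) Q p))"
    unfolding g_def Fprime_sum by (subst sum.swap) (simp add: sum_distrib_left)
  also have "\<dots> \<le> (\<Sum>i\<in>I. W i * real (1 + min h1 h2))"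
  proof (intro sum_mono mult_left_mono W)
    fix i assume i: "i \<in> I"
    have "(\<Sum>p\<in>Q. Fprime (\<lambda>q. of_bool (pleq (E i) q)) (\<lambda>q. of_bool (pleq (E i) q)) Q p)
        \<le> (\<Sum>p\<in>Q. of_bool (pleq (E i) p \<and> (\<forall>h \<in> Hset Q p. \<not> pleq (E i) h)))"
      by (intro sum_mono Fprime_indicator_le[OF finQ])
    also have "\<dots> = real (card {p \<in> Q. pleq (E i) p \<and> (\<forall>h \<in> Hset Q p. \<not> pleq (E i) h)})"
      using finQ by (simp add: Int_def)
    also have "\<dots> \<le> real (1 + min h1 h2)"
      using card_uncovered_le[OF finQ, of "E i"] depths[OF i] by (simp only: of_nat_le_iff)
    finally show "(\<Sum>p\<in>Q. Fprime (\<lambda>q. of_bool (pleq (E i) q)) (\<lambda>q. of_bool (pleq (E i) q)) Q p)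
        \<le> real (1 + min h1 h2)" .
  qed
  finally show ?thesis by (simp add: sum_distrib_right mult.commute)
qed

section \<open>Heavy sets and the size of the output\<close>

definition heavy_set :: "('a pfx \<Rightarrow> real) \<Rightarrow> ('a pfx \<Rightarrow> real) \<Rightarrow> real \<Rightarrow> 'a pfx set \<Rightarrow> bool" where
  "heavy_set fmin fmax thr X \<longleftrightarrow> (\<forall>p\<in>X. thr \<le> Fprime fmin fmax X p)"

lemma heavy_set_card_bound:
  fixes W :: "'i \<Rightarrow> real" and E :: "'i \<Rightarrow> 'a pfx"
  assumes finQ: "finite Q" and W: "\<And>i. i \<in> I \<Longrightarrow> 0 \<le> W i"
    and depths: "\<And>i. i \<in> I \<Longrightarrow> length (fst (E i)) = h1 \<and> length (snd (E i)) = h2"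
    and up: "\<And>q. fmax q \<le> (\<Sum>i\<in>I. W i * of_bool (pleq (E i) q)) + \<delta>"
    and lo: "\<And>q. (\<Sum>i\<in>I. W i * of_bool (pleq (E i) q)) \<le> fmin q + \<delta>"
    and \<delta>: "0 \<le> \<delta>" and heavy: "heavy_set fmin fmax thr Q"
  shows "thr * real (card Q)
    \<le> real (1 + min h1 h2) * (\<Sum>i\<in>I. W i) + \<delta> * real (card Q) * (1 + real (card Q) + real (card Q)^2)"
proof -
  define g where "g q = (\<Sum>i\<in>I. W i * of_bool (pleq (E i) q))" for q
  have "thr * real (card Q) \<le> (\<Sum>p\<in>Q. Fprime fmin fmax Q p)"
    using heavy sum_mono[of Q "\<lambda>_. thr"] unfolding heavy_set_def by (simp add: mult.commute)
  also have "\<dots> \<le> (\<Sum>p\<in>Q. Fprime g g Q p + \<delta> * (1 + real (card Q) + real (card Q)^2))"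
    using up lo unfolding g_def by (intro sum_mono Fprime_perturb_le[OF finQ _ _ \<delta>])
  also have "\<dots> \<le> real (1 + min h1 h2) * (\<Sum>i\<in>I. W i)
      + \<delta> * real (card Q) * (1 + real (card Q) + real (card Q)^2)"
    using sum_Fprime_le[OF finQ W depths] unfolding g_def by (simp add: sum.distrib)
  finally show ?thesis .
qed

lemma Fprime_cong_unrelated:
  assumes "X \<subseteq> X'" and "\<And>x. x \<in> X' - X \<Longrightarrow> \<not> pless x p"
  shows "Fprime fmin fmax X' p = Fprime fmin fmax X p"
proof -
  have "Hset X' p = Hset X p" using assms unfolding Hset_def by blast
  then show ?thesis unfolding Fprime_def by simp
qed

lemma out_acc_levels:
  "p \<in> out_acc T1 T2 L thr fmin fmax n \<Longrightarrow> p \<in> T1 \<times> T2 \<and> (\<exists>j<n. level p = L - j)"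
  by (induction n) (auto simp: Let_def less_Suc_eq)

lemma out_acc_extend_heavy:
  assumes n: "n \<le> L" and heavy: "heavy_set fmin fmax thr (out_acc T1 T2 L thr fmin fmax n)"
    and Q: "Q \<subseteq> {p \<in> T1 \<times> T2. level p = L - n
      \<and> thr \<le> Fprime fmin fmax (out_acc T1 T2 L thr fmin fmax n) p}"
  shows "heavy_set fmin fmax thr (out_acc T1 T2 L thr fmin fmax n \<union> Q)"
  unfolding heavy_set_def
proof
  let ?P = "out_acc T1 T2 L thr fmin fmax n"
  fix p assume p: "p \<in> ?P \<union> Q"
  have "L - n \<le> level p"
  proof (cases "p \<in> ?P")
    case True
    then show ?thesis using out_acc_levels[of p] by force
  qed (use p Q in auto)
  then have "\<not> pless x p" if "x \<in> (?P \<union> Q) - ?P" for x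
    using that Q pless_level[of x p] by fastforce
  then have "Fprime fmin fmax (?P \<union> Q) p = Fprime fmin fmax ?P p"
    by (intro Fprime_cong_unrelated) auto
  moreover have "thr \<le> Fprime fmin fmax ?P p" using p heavy Q unfolding heavy_set_def by auto
  ultimately show "thr \<le> Fprime fmin fmax (?P \<union> Q) p" by simp
qed

lemma out_acc_heavy: "n \<le> Suc L \<Longrightarrow> heavy_set fmin fmax thr (out_acc T1 T2 L thr fmin fmax n)"
proof (induction n)
  case (Suc n)
  then have "n \<le> L" and "heavy_set fmin fmax thr (out_acc T1 T2 L thr fmin fmax n)" by simp_all
  from out_acc_extend_heavy[OF this order.refl] show ?case by (simp add: Let_def)
qed (simp add: heavy_set_def)

lemma out_acc_card_le:
  assumes fin: "finite (T1 \<times> T2)"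
    and no_heavy: "\<And>X. X \<subseteq> T1 \<times> T2 \<Longrightarrow> heavy_set fmin fmax thr X \<Longrightarrow> card X \<noteq> Suc K"
    and n: "n \<le> Suc L"
  shows "card (out_acc T1 T2 L thr fmin fmax n) \<le> K"
  using n
proof (induction n)
  case (Suc n)
  let ?P = "out_acc T1 T2 L thr fmin fmax n"
  let ?New = "{p \<in> T1 \<times> T2. level p = L - n \<and> thr \<le> Fprime fmin fmax ?P p}"
  have nL: "n \<le> L" using Suc.prems by simp
  have P: "?P \<subseteq> T1 \<times> T2" using out_acc_levels by blast
  have finP: "finite ?P" and finNew: "finite ?New" using P fin by (auto intro: finite_subset)
  have disjoint: "?P \<inter> ?New = {}" using out_acc_levels nL by fastforce
  show ?case
  proof (rule ccontr)
    assume "\<not> card (out_acc T1 T2 L thr fmin fmax (Suc n)) \<le> K"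
    then have "Suc K - card ?P \<le> card ?New"
      using card_Un_disjoint[OF finP finNew disjoint] by (simp add: Let_def)
    \<comment> \<open>stopping within the new level gives a heavy set of exactly K + 1 elements\<close>
    then obtain Q where Q: "Q \<subseteq> ?New" "card Q = Suc K - card ?P" "finite Q"
      by (rule obtain_subset_with_card_n)
    have "card ?P \<le> K" using Suc by simp
    then have "card (?P \<union> Q) = Suc K"
      using card_Un_disjoint[OF finP Q(3)] disjoint Q(1,2) by auto
    moreover have "heavy_set fmin fmax thr (?P \<union> Q)"
      using out_acc_extend_heavy[OF nL out_acc_heavy Q(1)] Suc.prems by simp
    moreover have "?P \<union> Q \<subseteq> T1 \<times> T2" using P Q(1) by auto
    ultimately show False using no_heavy by blast
  qed
qed simp

lemma est_heavy_set_card_bound: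
  fixes \<phi> :: real and xs :: "('a pfx \<times> nat) list"
  defines "N \<equiv> real (sum_list (map snd xs))"
  assumes run: "alg_run h1 h2 m (\<lambda>_. Map.empty) xs st" and m: "0 < m"
    and depths: "\<forall>(e, c) \<in> set xs. length (fst e) = h1 \<and> length (snd e) = h2"
    and X: "finite X" and heavy: "heavy_set (est_fmin m st) (est_fmax m st) (\<phi> * N) X"
  shows "\<phi> * N * real (card X)
    \<le> real (1 + min h1 h2) * N + N / real m * real (card X) * (1 + real (card X) + real (card X)^2)"
proof -
  have N_sum: "(\<Sum>i<length xs. real (snd (xs ! i))) = N"
    unfolding N_def sum_list_sum_nth by (simp add: atLeast0LessThan of_nat_sum)
  have up: "est_fmax m st q
      \<le> (\<Sum>i<length xs. real (snd (xs ! i)) * of_bool (pleq (fst (xs ! i)) q)) + N / real m"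
    and lo: "(\<Sum>i<length xs. real (snd (xs ! i)) * of_bool (pleq (fst (xs ! i)) q))
      \<le> est_fmin m st q + N / real m"
    for q using est_error_bounds[OF run m depths, of q] unfolding freq_conv_sum N_def by simp_all
  have item_depths: "length (fst (fst (xs ! i))) = h1 \<and> length (snd (fst (xs ! i))) = h2"
    if "i \<in> {..<length xs}" for i
    using depths nth_mem[of i xs] that by (auto simp: case_prod_beta)
  have "0 \<le> N / real m" by (simp add: N_def)
  then show ?thesis
    using heavy_set_card_bound[OF X _ item_depths up lo _ heavy] unfolding N_sum by simp
qed

lemma hhh_output_card_le:
  fixes \<phi> :: real
  assumes trees: "is_tree T1 h1" "is_tree T2 h2" and m: "0 < m" and "stream \<noteq> []"
    and items: "\<forall>((e1, e2), c) \<in> set stream. e1 \<in> T1 \<and> length e1 = h1 \<and> e2 \<in> T2 \<and> length e2 = h2 \<and> c > 0"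
    and run: "alg_run h1 h2 m (\<lambda>_. Map.empty) stream st"
    and K: "real (Suc K) * (1 + real (Suc K) + real (Suc K)^2) / real m
      < \<phi> * real (Suc K) - real (1 + min h1 h2)"
  shows "card (hhh_output T1 T2 h1 h2 m st \<phi> (real (sum_list (map snd stream)))) \<le> K"
proof -
  define N where "N = real (sum_list (map snd stream))"
  have fin: "finite (T1 \<times> T2)" using trees unfolding is_tree_def by simp
  have depths: "\<forall>(e, c) \<in> set stream. length (fst e) = h1 \<and> length (snd e) = h2"
    using items by auto
  have "0 < N" unfolding N_def using \<open>stream \<noteq> []\<close> items by (cases stream) (auto simp: case_prod_beta)
  have "card X \<noteq> Suc K"
    if "X \<subseteq> T1 \<times> T2" and "heavy_set (est_fmin m st) (est_fmax m st) (\<phi> * N) X" for X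
  proof
    assume card: "card X = Suc K"
    have "finite X" using that(1) fin finite_subset by blast
    from est_heavy_set_card_bound[OF run m depths this that(2)[unfolded N_def]]
    have "N * (\<phi> * real (Suc K)) \<le> N * (real (1 + min h1 h2)
        + real (Suc K) * (1 + real (Suc K) + real (Suc K)^2) / real m)"
      unfolding card N_def[symmetric] by (simp add: field_simps)
    moreover have "\<dots> < N * (\<phi> * real (Suc K))"
      using K \<open>0 < N\<close> by (intro mult_strict_left_mono) simp_all
    ultimately show False by simp
  qed
  then show ?thesis
    unfolding hhh_output_def N_def[symmetric] by (intro out_acc_card_le[OF fin]) simp_all
qed

lemma ratio_le_hhh_bound:
  fixes A \<phi> \<epsilon> :: real
  assumes A: "1 \<le> A" and \<phi>: "0 < \<phi>" and \<epsilon>: "0 < \<epsilon>"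
    and small1: "\<epsilon> \<le> \<phi> / (2 * (1 + A))" and small2: "\<epsilon> \<le> \<phi>\<^sup>2 / (4 * A\<^sup>2)"
  shows "A / \<phi> \<le> 2 / (A * \<epsilon>) * (\<phi> - (1 + A) * \<epsilon> - sqrt ((\<phi> - (1 + A) * \<epsilon>)\<^sup>2 - A\<^sup>2 * \<epsilon>))"
proof -
  define x where "x = \<phi> - (1 + A) * \<epsilon>"
  define s where "s = sqrt (x\<^sup>2 - A\<^sup>2 * \<epsilon>)"
  have x: "\<phi> / 2 \<le> x" "x \<le> \<phi>" using small1 A \<epsilon> unfolding x_def by (auto simp: field_simps)
  have "(\<phi> / 2)\<^sup>2 \<le> x\<^sup>2" using x \<phi> by (intro power_mono) auto
  moreover have "A\<^sup>2 * \<epsilon> \<le> \<phi>\<^sup>2 / 4" using small2 A by (simp add: field_simps)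
  ultimately have radicand: "0 \<le> x\<^sup>2 - A\<^sup>2 * \<epsilon>" by (simp add: power_divide)
  have s: "0 \<le> s" "s\<^sup>2 = x\<^sup>2 - A\<^sup>2 * \<epsilon>" unfolding s_def using radicand by simp_all
  have "s \<le> sqrt (x\<^sup>2)" unfolding s_def using A \<epsilon> by (intro real_sqrt_le_mono) auto
  then have "x + s \<le> 2 * \<phi>" using x \<phi> by simp
  then have "A * (x + s) \<le> A * (2 * \<phi>)" using A by (intro mult_left_mono) auto
  moreover have pos: "0 < x + s" using x \<phi> s by linarith
  ultimately have "A / \<phi> \<le> 2 * A / (x + s)" using A \<phi> by (simp add: field_simps)
  also have "2 * A / (x + s) = 2 / (A * \<epsilon>) * (x - s)"
  proof -
    have "(x - s) * (x + s) = A\<^sup>2 * \<epsilon>" using s by (simp add: algebra_simps power2_eq_square)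
    then show ?thesis using pos A \<epsilon> by (simp add: field_simps power2_eq_square)
  qed
  finally show ?thesis unfolding s_def x_def .
qed

theorem theorem5:
  fixes h1 h2 :: nat and \<phi> :: real
  assumes "0 < \<phi>" and "\<phi> \<le> 1"
  shows "\<exists>\<epsilon>0 > 0. \<forall>(T1 :: 'a list set) (T2 :: 'a list set) (m :: nat)
            (stream :: ('a pfx \<times> nat) list) (st :: 'a alg_state).
     is_tree T1 h1 \<longrightarrow> is_tree T2 h2 \<longrightarrow> m > 0 \<longrightarrow> 1 / real m < \<epsilon>0 \<longrightarrow>
     stream \<noteq> [] \<longrightarrow>
     (\<forall>((e1, e2), c) \<in> set stream. e1 \<in> T1 \<and> length e1 = h1 \<and> e2 \<in> T2 \<and> length e2 = h2 \<and> c > 0) \<longrightarrow>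
     alg_run h1 h2 m (\<lambda>_. Map.empty) stream st \<longrightarrow>
     (let \<epsilon> = 1 / real m; A = real (1 + min h1 h2);
          N = real (sum_list (map snd stream));
          P = hhh_output T1 T2 h1 h2 m st \<phi> N
      in real (card P) \<le> 2 / (A * \<epsilon>) *
           (\<phi> - (1 + A) * \<epsilon> - sqrt ((\<phi> - (1 + A) * \<epsilon>)\<^sup>2 - A\<^sup>2 * \<epsilon>)))"
proof -
  define A where "A = real (1 + min h1 h2)"
  define K where "K = nat \<lfloor>A / \<phi>\<rfloor>"
  define C where "C = real (Suc K) * (1 + real (Suc K) + real (Suc K)^2)"
  define \<epsilon>0 where "\<epsilon>0 = min ((\<phi> * real (Suc K) - A) / C) (min (\<phi> / (2 * (1 + A))) (\<phi>\<^sup>2 / (4 * A\<^sup>2)))"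
  have A: "1 \<le> A" and C: "0 < C" unfolding A_def C_def by (simp_all add: add_pos_nonneg)
  have "0 \<le> A / \<phi>" using A \<open>0 < \<phi>\<close> by simp
  then have "real K \<le> A / \<phi>" and "A / \<phi> < real K + 1" unfolding K_def by linarith+
  then have K: "real K \<le> A / \<phi>" "A < \<phi> * real (Suc K)" using \<open>0 < \<phi>\<close> by (simp_all add: field_simps)
  have "0 < \<epsilon>0" unfolding \<epsilon>0_def using C K A \<open>0 < \<phi>\<close> by simp
  moreover have "real (card (hhh_output T1 T2 h1 h2 m st \<phi> (real (sum_list (map snd stream)))))
      \<le> 2 / (A * (1 / real m)) * (\<phi> - (1 + A) * (1 / real m)
        - sqrt ((\<phi> - (1 + A) * (1 / real m))\<^sup>2 - A\<^sup>2 * (1 / real m)))"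
    if "is_tree T1 h1" "is_tree T2 h2" "0 < m" "1 / real m < \<epsilon>0" "stream \<noteq> []"
      "\<forall>((e1, e2), c) \<in> set stream. e1 \<in> T1 \<and> length e1 = h1 \<and> e2 \<in> T2 \<and> length e2 = h2 \<and> c > 0"
      "alg_run h1 h2 m (\<lambda>_. Map.empty) stream st"
    for T1 T2 :: "'a list set" and m stream st
  proof -
    have "C / real m < \<phi> * real (Suc K) - A"
      using that(4) C unfolding \<epsilon>0_def by (simp add: field_simps)
    then have "card (hhh_output T1 T2 h1 h2 m st \<phi> (real (sum_list (map snd stream)))) \<le> K"
      using hhh_output_card_le[OF that(1-3,5-7)] unfolding C_def A_def by blast
    moreover have "A / \<phi> \<le> 2 / (A * (1 / real m)) * (\<phi> - (1 + A) * (1 / real m)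
        - sqrt ((\<phi> - (1 + A) * (1 / real m))\<^sup>2 - A\<^sup>2 * (1 / real m)))"
      using that(3,4) unfolding \<epsilon>0_def by (intro ratio_le_hhh_bound A \<open>0 < \<phi>\<close>) simp_all
    ultimately show ?thesis using K(1) by linarith
  qed
  ultimately show ?thesis unfolding Let_def A_def[symmetric] by blast
qed

end
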